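(* For the erased fair coin flips source with erasure probability $\delta$ and any $(d_s,d_x)\in\mathcal D_2\cup\mathcal D_3$, for every blocklength $k$ and positive integer $M$ there exists a $(k,M,d_s,d_x,\epsilon)$ code such that \[\epsilon\le\sum_{t=0}^k\mathsf{binopmf}(t;k,\delta)\sum_{i=0}^t\mathsf{binopmf}(i;t,1/2)\Big(1-\mathsf{binocdf}\big(\min\{\lfloor kd_s\rfloor-i,\ \lfloor kd_x\rfloor-t\};k-t,1/2\big)\Big)^M.\]
   Context: Erased fair coin flips (EFCF): $S$ uniform on $\{0,1\}$; $X\in\{0,1,e\}$ equals $S$ with probability $1-\delta$ and $e$ with probability $\delta$; blocks $(S^k,X^k)$ have i.i.d. components. Reconstructions $z^k\in\{0,1\}^k$, $y^k\in\{0,1,e\}^k$ with normalized Hamming distortions $\mathsf d_s(s^k,z^k)=\frac1k\sum_i1\{s_i\ne z_i\}$, $\mathsf d_x(x^k,y^k)=\frac1k\sum_i1\{x_i\ne y_i\}$. A $(k,M,d_s,d_x,\epsilon)$ code is a random encoder $P_{U|X^k}$ into $\{1,\dots,M\}$ and a random decoder $P_{Z^kY^k|U}$ with $\mathbb P[\mathsf d_s(S^k,Z^k)>d_s\text{ or }\mathsf d_x(X^k,Y^k)>d_x]\le\epsilon$. Regions: $\mathcal D_2=\{2\delta\le d_x\le1/2+\delta/2,\ d_s\ge d_x-\delta/2\}$, $\mathcal D_3=\{d_x\ge d_s+\delta/2,\ \delta/2\le d_s\le1/2\}$. $\mathsf{binopmf}(\cdot;n,p)$ and $\mathsf{binocdf}(\cdot;n,p)$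 are the pmf and cdf of the Binomial$(n,p)$ distribution (cdf zero at negative arguments). *)

theory Defs
  imports "HOL-Probability.Probability"
begin

definition binopmf :: "nat \<Rightarrow> nat \<Rightarrow> real \<Rightarrow> real" where
  "binopmf t n p = real (n choose t) * p ^ t * (1 - p) ^ (n - t)"

definition binocdf :: "int \<Rightarrow> nat \<Rightarrow> real \<Rightarrow> real" where
  "binocdf x n p = (if x < 0 then 0 else (\<Sum>j\<le>nat x. binopmf j n p))"

definition hamming_dist :: "'a list \<Rightarrow> 'a list \<Rightarrow> real" where
  "hamming_dist xs ys = real (card {i. i < length xs \<and> xs ! i \<noteq> ys ! i}) / real (length xs)"

text \<open>Single letter of the erased fair coin flips source: (S, X), with X = None the erasure e.\<close>
definition efcf_pmf :: "real \<Rightarrow> (bool \<times> bool option) pmf" where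
  "efcf_pmf \<delta> = do { s \<leftarrow> pmf_of_set (UNIV :: bool set); er \<leftarrow> bernoulli_pmf \<delta>;
                    return_pmf (s, if er then None else Some s) }"

fun efcf_block :: "real \<Rightarrow> nat \<Rightarrow> (bool \<times> bool option) list pmf" where
  "efcf_block \<delta> 0 = return_pmf []"
| "efcf_block \<delta> (Suc k) = do { a \<leftarrow> efcf_pmf \<delta>; as \<leftarrow> efcf_block \<delta> k; return_pmf (a # as) }"

definition valid_code :: "nat \<Rightarrow> nat \<Rightarrow> (bool option list \<Rightarrow> nat pmf)
     \<Rightarrow> (nat \<Rightarrow> (bool list \<times> bool option list) pmf) \<Rightarrow> bool" where
  "valid_code k M enc dec \<longleftrightarrow>
     (\<forall>x. set_pmf (enc x) \<subseteq> {1..M}) \<and>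
     (\<forall>u z y. (z, y) \<in> set_pmf (dec u) \<longrightarrow> length z = k \<and> length y = k)"

definition excess_prob :: "real \<Rightarrow> nat \<Rightarrow> (bool option list \<Rightarrow> nat pmf)
     \<Rightarrow> (nat \<Rightarrow> (bool list \<times> bool option list) pmf) \<Rightarrow> real \<Rightarrow> real \<Rightarrow> real" where
  "excess_prob \<delta> k enc dec ds dx =
     measure_pmf.prob
       (do { sx \<leftarrow> efcf_block \<delta> k; u \<leftarrow> enc (map snd sx); zy \<leftarrow> dec u;
             return_pmf (map fst sx, map snd sx, fst zy, snd zy) })
       {(s, x, z, y). hamming_dist s z > ds \<or> hamming_dist x y > dx}"

definition is_code :: "real \<Rightarrow> nat \<Rightarrow> nat \<Rightarrow> real \<Rightarrow> real \<Rightarrow> real \<Rightarrow> bool" where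
  "is_code \<delta> k M ds dx \<epsilon> \<longleftrightarrow>
     (\<exists>enc dec. valid_code k M enc dec \<and> excess_prob \<delta> k enc dec ds dx \<le> \<epsilon>)"

definition D2 :: "real \<Rightarrow> (real \<times> real) set" where
  "D2 \<delta> = {(ds, dx). 2 * \<delta> \<le> dx \<and> dx \<le> 1/2 + \<delta>/2 \<and> ds \<ge> dx - \<delta>/2}"

definition D3 :: "real \<Rightarrow> (real \<times> real) set" where
  "D3 \<delta> = {(ds, dx). dx \<ge> ds + \<delta>/2 \<and> \<delta>/2 \<le> ds \<and> ds \<le> 1/2}"

end

(*
  Random coding. Draw M codewords independently and uniformly from {0,1}^k; the encoder sends
  the index of a codeword with the fewest mismatches on the unerased positions of x^k, and the
  decoder outputs that codeword both as z^k and as y^k. Condition on the number t of erasures.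
  The unerased mismatch count of the selected codeword is the minimum of M independent
  Binomial(k-t,1/2) variables, so it exceeds c with probability (1 - binocdf(c))^M. Since the
  selection ignores the erased positions, the selected codeword is still a fresh fair coin word
  there, so its number i of mismatches with s^k on the erased positions is an independent
  Binomial(t,1/2) variable. A distortion constraint is violated exactly when the unerased
  mismatches exceed min(floor(k d_s) - i, floor(k d_x) - t). Averaging over t ~ Binomial(k,delta)
  bounds the expected excess-distortion probability of the random code, and some codebook does
  at least as well as the average. The regions D2 and D3 enter only through d_s, d_x >= 0.
*)

theory Submission
  imports Defs
begin

lemma measure_pmf_prob_bind:
  "measure_pmf.prob (bind_pmf p f) A = measure_pmf.expectation p (\<lambda>x. measure_pmf.prob (f x) A)"
proof -
  have integrable: "integrable (measure_pmf p) (\<lambda>x. measure_pmf.prob (f x) A)"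
    by (rule measure_pmf.integrable_const_bound[where B=1]) auto
  have "emeasure (measure_pmf (bind_pmf p f)) A = (\<integral>\<^sup>+x. emeasure (f x) A \<partial>p)"
    by (rule emeasure_bind_pmf)
  also have "\<dots> = (\<integral>\<^sup>+x. ennreal (measure_pmf.prob (f x) A) \<partial>p)"
    by (simp add: measure_pmf.emeasure_eq_measure)
  also have "\<dots> = ennreal (measure_pmf.expectation p (\<lambda>x. measure_pmf.prob (f x) A))"
    by (rule nn_integral_eq_integral) (use integrable in auto)
  finally show ?thesis
    by (simp add: measure_pmf.emeasure_eq_measure)
qed

lemma measure_pmf_prob_pair_pmf:
  "measure_pmf.prob (pair_pmf p q) A = measure_pmf.expectation q (\<lambda>y. measure_pmf.prob p {x. (x, y) \<in> A})"
proof -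
  have "pair_pmf p q = bind_pmf q (\<lambda>y. map_pmf (\<lambda>x. (x, y)) p)"
    unfolding pair_pmf_def map_pmf_def by (rule bind_commute_pmf)
  then show ?thesis
    by (simp add: measure_pmf_prob_bind vimage_def)
qed

lemma expectation_prob_swap:
  "measure_pmf.expectation p (\<lambda>x. measure_pmf.prob q {y. P x y}) =
   measure_pmf.expectation q (\<lambda>y. measure_pmf.prob p {x. P x y})"
  using measure_pmf_prob_pair_pmf[of p q "{(x, y). P x y}"]
        measure_pmf_prob_pair_pmf[of q p "{(y, x). P x y}"]
  by (simp add: pair_commute_pmf[of p q] vimage_def case_prod_unfold)

lemma measure_pmf_exists_le_expectation:
  fixes f :: "'a \<Rightarrow> real"
  assumes "finite (set_pmf p)"
  shows "\<exists>x\<in>set_pmf p. f x \<le> measure_pmf.expectation p f"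
proof -
  obtain x where x: "x \<in> set_pmf p" "\<And>y. y \<in> set_pmf p \<Longrightarrow> f x \<le> f y"
    using arg_min_if_finite[OF assms set_pmf_not_empty, of f] by (metis not_less)
  have "f x = measure_pmf.expectation p (\<lambda>_. f x)" by simp
  also have "\<dots> \<le> measure_pmf.expectation p f"
    using x assms by (intro integral_mono_AE integrable_measure_pmf_finite) (auto simp: AE_measure_pmf_iff)
  finally show ?thesis using x(1) by blast
qed

lemma Pi_pmf_map_dependent:
  assumes [simp]: "finite A" and "\<And>x. x \<notin> A \<Longrightarrow> f x dflt = dflt'"
  shows "Pi_pmf A dflt' (\<lambda>x. map_pmf (f x) (p x)) = map_pmf (\<lambda>h x. f x (h x)) (Pi_pmf A dflt p)"
proof -
  have "Pi_pmf A dflt' (\<lambda>x. map_pmf (f x) (p x)) =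
          Pi_pmf A dflt p \<bind> (\<lambda>h. return_pmf (\<lambda>x. if x \<in> A then f x (h x) else dflt'))"
    unfolding map_pmf_def by (subst Pi_pmf_bind[where d' = dflt]) auto
  also have "\<dots> = map_pmf (\<lambda>h x. f x (h x)) (Pi_pmf A dflt p)"
    unfolding map_pmf_def using set_Pi_pmf_subset'[of A dflt p]
    by (intro bind_pmf_cong refl arg_cong[of _ _ return_pmf])
       (auto simp: fun_eq_iff PiE_dflt_def assms(2))
  finally show ?thesis .
qed

lemma Pi_pmf_map_invariant:
  assumes "finite A" and "\<And>x. x \<in> A \<Longrightarrow> map_pmf (f x) (p x) = p x"
    and "\<And>x. x \<notin> A \<Longrightarrow> f x dflt = dflt"
  shows "map_pmf (\<lambda>h x. f x (h x)) (Pi_pmf A dflt p) = Pi_pmf A dflt p"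
proof -
  have "map_pmf (\<lambda>h x. f x (h x)) (Pi_pmf A dflt p) = Pi_pmf A dflt (\<lambda>x. map_pmf (f x) (p x))"
    by (rule Pi_pmf_map_dependent[symmetric]) (use assms in auto)
  also have "\<dots> = Pi_pmf A dflt p"
    by (rule Pi_pmf_cong) (use assms(2) in auto)
  finally show ?thesis .
qed

lemma Pi_pmf_pair_pmf:
  assumes "finite A"
  shows "Pi_pmf A (a, b) (\<lambda>x. pair_pmf (p x) (q x)) =
         map_pmf (\<lambda>(f, g) x. (f x, g x)) (pair_pmf (Pi_pmf A a p) (Pi_pmf A b q))"
proof (rule pmf_eqI)
  fix h :: "'a \<Rightarrow> 'b \<times> 'c"
  let ?zip = "\<lambda>(f, g) x. (f x, g x) :: 'b \<times> 'c"
  have "inj ?zip"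
    by (auto simp: inj_def fun_eq_iff)
  have "pmf (map_pmf ?zip (pair_pmf (Pi_pmf A a p) (Pi_pmf A b q))) (?zip (fst \<circ> h, snd \<circ> h))
      = pmf (Pi_pmf A a p) (fst \<circ> h) * pmf (Pi_pmf A b q) (snd \<circ> h)"
    by (subst pmf_map_inj'[OF \<open>inj ?zip\<close>]) (rule pmf_pair)
  moreover have "?zip (fst \<circ> h, snd \<circ> h) = h"
    by auto
  ultimately have "pmf (map_pmf ?zip (pair_pmf (Pi_pmf A a p) (Pi_pmf A b q))) h
      = pmf (Pi_pmf A a p) (fst \<circ> h) * pmf (Pi_pmf A b q) (snd \<circ> h)"
    by simp
  moreover have "(\<forall>x. x \<notin> A \<longrightarrow> h x = (a, b)) \<longleftrightarrow>
      (\<forall>x. x \<notin> A \<longrightarrow> fst (h x) = a) \<and> (\<forall>x. x \<notin> A \<longrightarrow> snd (h x) = b)"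
    by (auto simp: prod_eq_iff)
  moreover have "pmf (pair_pmf (p x) (q x)) (h x) = pmf (p x) (fst (h x)) * pmf (q x) (snd (h x))" for x
    by (metis pmf_pair prod.collapse)
  ultimately show "pmf (Pi_pmf A (a, b) (\<lambda>x. pair_pmf (p x) (q x))) h
      = pmf (map_pmf ?zip (pair_pmf (Pi_pmf A a p) (Pi_pmf A b q))) h"
    using assms by (auto simp add: pmf_Pi prod.distrib)
qed

lemma arg_min_on_cong:
  "(\<And>x. x \<in> S \<Longrightarrow> f x = g x) \<Longrightarrow> arg_min_on f S = arg_min_on g S"
  unfolding arg_min_on_def arg_min_def is_arg_min_def by (intro arg_cong[where f=Eps] ext) auto

lemma arg_min_on_lessThan:
  fixes f :: "nat \<Rightarrow> 'a::linorder"
  shows "M > 0 \<Longrightarrow> arg_min_on f {..<M} < M"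
  using arg_min_if_finite(1)[of "{..<M}" f] by auto

lemma expectation_binomial_pmf:
  assumes "p \<in> {0..1}"
  shows "measure_pmf.expectation (binomial_pmf n p) f = (\<Sum>i\<le>n. binopmf i n p * f i)"
proof -
  have "measure_pmf.expectation (binomial_pmf n p) f = (\<Sum>i\<le>n. pmf (binomial_pmf n p) i *\<^sub>R f i)"
    using assms by (intro integral_measure_pmf) (auto simp: set_pmf_binomial_eq split: if_splits)
  then show ?thesis
    using assms by (simp add: binopmf_def)
qed

lemma measure_binomial_pmf_greater:
  assumes "p \<in> {0..1}"
  shows "measure_pmf.prob (binomial_pmf n p) {j. c < int j} = 1 - binocdf c n p"
proof -
  have "measure_pmf.prob (binomial_pmf n p) {j. int j \<le> c} = binocdf c n p"
  proof (cases "c < 0")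
    case False
    then have "{j. int j \<le> c} = {..nat c}" by auto
    then show ?thesis
      using False assms by (simp add: binocdf_def binopmf_def measure_measure_pmf_finite)
  qed (simp add: binocdf_def)
  moreover have "{j. c < int j} = UNIV - {j. int j \<le> c}" by auto
  ultimately show ?thesis
    using measure_pmf.prob_compl[of "{j. int j \<le> c}" "binomial_pmf n p"] by simp
qed

definition fair_coins :: "'a set \<Rightarrow> ('a \<Rightarrow> bool) pmf" where
  "fair_coins A = Pi_pmf A False (\<lambda>_. bernoulli_pmf (1/2))"

definition random_codebook :: "nat \<Rightarrow> 'a set \<Rightarrow> (nat \<Rightarrow> 'a \<Rightarrow> bool) pmf" where
  "random_codebook M A = Pi_pmf {..<M} (\<lambda>_. False) (\<lambda>_. fair_coins A)"

lemma map_pmf_card_fair_coins: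
  assumes "finite A"
  shows "map_pmf (\<lambda>w. card {x\<in>A. w x}) (fair_coins A) = binomial_pmf (card A) (1/2)"
  unfolding fair_coins_def using binomial_pmf_altdef'[OF assms refl, of "1/2" False] by simp

lemma map_pmf_Not_bernoulli_half: "map_pmf Not (bernoulli_pmf (1/2)) = bernoulli_pmf (1/2)"
proof (rule pmf_eqI)
  fix b
  have "Not -` {b} = {\<not> b}" by auto
  then show "pmf (map_pmf Not (bernoulli_pmf (1/2))) b = pmf (bernoulli_pmf (1/2)) b"
    by (simp add: pmf_map measure_pmf_single)
qed

lemma fair_coins_flip_invariant:
  assumes "finite A" and "\<And>x. x \<notin> A \<Longrightarrow> \<not> s x"
  shows "map_pmf (\<lambda>w x. w x \<noteq> s x) (fair_coins A) = fair_coins A"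
proof -
  have "map_pmf (\<lambda>b. b \<noteq> s x) (bernoulli_pmf (1/2)) = bernoulli_pmf (1/2)" for x
    by (cases "s x") (simp_all add: map_pmf_Not_bernoulli_half[unfolded eta_contract_eq] pmf.map_ident)
  then show ?thesis
    unfolding fair_coins_def using assms by (intro Pi_pmf_map_invariant) auto
qed

lemma random_codebook_flip_invariant:
  assumes "finite A" and "\<And>x. x \<notin> A \<Longrightarrow> \<not> s x"
  shows "map_pmf (\<lambda>C m x. C m x \<noteq> (m < M \<and> s x)) (random_codebook M A) = random_codebook M A"
  unfolding random_codebook_def
  using fair_coins_flip_invariant[OF assms] by (intro Pi_pmf_map_invariant) auto

lemma random_codebook_union:
  assumes "finite A" "finite B" "A \<inter> B = {}"
  shows "random_codebook M (A \<union> B) =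
    map_pmf (\<lambda>(G, H) m x. if x \<in> A then G m x else H m x)
      (pair_pmf (random_codebook M A) (random_codebook M B))"
proof -
  let ?merge = "\<lambda>(g, h) x. if x \<in> A then g x else h x"
  have "random_codebook M (A \<union> B) =
      Pi_pmf {..<M} (\<lambda>_. False) (\<lambda>_. map_pmf ?merge (pair_pmf (fair_coins A) (fair_coins B)))"
    unfolding random_codebook_def fair_coins_def using assms by (simp add: Pi_pmf_union)
  also have "\<dots> = map_pmf (\<lambda>h m. ?merge (h m))
      (Pi_pmf {..<M} (\<lambda>_. False, \<lambda>_. False) (\<lambda>_. pair_pmf (fair_coins A) (fair_coins B)))"
    by (subst Pi_pmf_map[where dflt = "(\<lambda>_. False, \<lambda>_. False)"]) (auto intro!: pmf.map_cong simp: fun_eq_iff)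
  also have "\<dots> = map_pmf (\<lambda>(G, H) m x. if x \<in> A then G m x else H m x)
      (pair_pmf (random_codebook M A) (random_codebook M B))"
    by (simp add: Pi_pmf_pair_pmf random_codebook_def pmf.map_comp o_def case_prod_unfold)
  finally show ?thesis .
qed

lemma finite_set_pmf_random_codebook:
  assumes "finite A"
  shows "finite (set_pmf (random_codebook M A))"
proof -
  have "finite (set_pmf (fair_coins A))"
    unfolding fair_coins_def using assms
    by (intro finite_subset[OF set_Pi_pmf_subset'] finite_PiE_dflt) auto
  then show ?thesis
    unfolding random_codebook_def
    by (intro finite_subset[OF set_Pi_pmf_subset'] finite_PiE_dflt) auto
qed

lemma measure_Pi_pmf_arg_min:
  fixes J :: "'a \<Rightarrow> 'b::linorder"
  assumes "M > 0" and upward_closed: "\<And>y z. P y \<Longrightarrow> y \<le> z \<Longrightarrow> P z"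
  shows "measure_pmf.prob (Pi_pmf {..<M} d (\<lambda>_. p)) {G. P (J (G (arg_min_on (\<lambda>m. J (G m)) {..<M})))}
       = measure_pmf.prob p {g. P (J g)} ^ M"
proof -
  have "{G. P (J (G (arg_min_on (\<lambda>m. J (G m)) {..<M})))} = Pi {..<M} (\<lambda>_. {g. P (J g)})"
  proof (intro set_eqI iffI)
    fix G
    have "arg_min_on (\<lambda>m. J (G m)) {..<M} < M"
      and "\<And>m. m < M \<Longrightarrow> J (G (arg_min_on (\<lambda>m. J (G m)) {..<M})) \<le> J (G m)"
      using arg_min_if_finite[of "{..<M}" "\<lambda>m. J (G m)"] assms(1) by (auto simp: not_less)
    then show "G \<in> {G. P (J (G (arg_min_on (\<lambda>m. J (G m)) {..<M})))}
        \<Longrightarrow> G \<in> Pi {..<M} (\<lambda>_. {g. P (J g)})"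
      and "G \<in> Pi {..<M} (\<lambda>_. {g. P (J g)})
        \<Longrightarrow> G \<in> {G. P (J (G (arg_min_on (\<lambda>m. J (G m)) {..<M})))}"
      using upward_closed by auto
  qed
  then show ?thesis
    by (simp add: measure_Pi_pmf_Pi)
qed

lemma pair_pmf_Pi_pmf_select:
  assumes "finite A" and "\<And>x. \<sigma> x \<in> A"
  shows "map_pmf (\<lambda>(x, H). (x, H (\<sigma> x))) (pair_pmf p (Pi_pmf A d (\<lambda>_. q))) = pair_pmf p q"
proof -
  have pair_eq: "pair_pmf p (Pi_pmf A d (\<lambda>_. q)) = bind_pmf p (\<lambda>x. map_pmf (Pair x) (Pi_pmf A d (\<lambda>_. q)))"
    "pair_pmf p q = bind_pmf p (\<lambda>x. map_pmf (Pair x) q)"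
    by (simp_all add: pair_pmf_def map_pmf_def)
  have component: "map_pmf (\<lambda>H. (x, H (\<sigma> x))) (Pi_pmf A d (\<lambda>_. q)) = map_pmf (Pair x) q" for x
  proof -
    have "map_pmf (\<lambda>H. (x, H (\<sigma> x))) (Pi_pmf A d (\<lambda>_. q))
        = map_pmf (Pair x) (map_pmf (\<lambda>H. H (\<sigma> x)) (Pi_pmf A d (\<lambda>_. q)))"
      by (simp add: pmf.map_comp o_def)
    also have "map_pmf (\<lambda>H. H (\<sigma> x)) (Pi_pmf A d (\<lambda>_. q)) = q"
      using assms by (simp add: Pi_pmf_component)
    finally show ?thesis .
  qed
  show ?thesis
    unfolding pair_eq by (simp add: map_bind_pmf pmf.map_comp o_def component)
qed

lemma measure_random_codebook_min_weight_greater: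
  assumes "finite F" "M > 0"
  shows "measure_pmf.prob (random_codebook M F)
      {G. c < int (card {x\<in>F. G (arg_min_on (\<lambda>m. card {x\<in>F. G m x}) {..<M}) x})}
    = (1 - binocdf c (card F) (1/2)) ^ M"
proof -
  have "measure_pmf.prob (random_codebook M F)
      {G. c < int (card {x\<in>F. G (arg_min_on (\<lambda>m. card {x\<in>F. G m x}) {..<M}) x})}
    = measure_pmf.prob (fair_coins F) {w. c < int (card {x\<in>F. w x})} ^ M"
    unfolding random_codebook_def using assms(2) by (rule measure_Pi_pmf_arg_min) auto
  also have "\<dots> = measure_pmf.prob (binomial_pmf (card F) (1/2)) {j. c < int j} ^ M"
    using assms(1) by (simp flip: map_pmf_card_fair_coins add: vimage_def)
  finally show ?thesis
    by (simp add: measure_binomial_pmf_greater)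
qed

lemma measure_random_codebook_nearest:
  fixes a b :: int
  assumes "finite E" "finite F" "E \<inter> F = {}" "M > 0"
  defines "nearest B \<equiv> arg_min_on (\<lambda>m. card {x\<in>F. B m x}) {..<M}"
  shows "measure_pmf.prob (random_codebook M (F \<union> E))
      {B. min (a - int (card {x\<in>E. B (nearest B) x})) b < int (card {x\<in>F. B (nearest B) x})}
    = (\<Sum>i\<le>card E. binopmf i (card E) (1/2) * (1 - binocdf (min (a - int i) b) (card F) (1/2)) ^ M)"
proof -
  define merge :: "(nat \<Rightarrow> 'a \<Rightarrow> bool) \<times> (nat \<Rightarrow> 'a \<Rightarrow> bool) \<Rightarrow> nat \<Rightarrow> 'a \<Rightarrow> bool"
    where "merge = (\<lambda>GH m x. if x \<in> F then fst GH m x else snd GH m x)"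
  let ?fails = "\<lambda>G i. min (a - int i) b < int (card {x\<in>F. G (nearest G) x})"
  have card_merge: "card {x\<in>F. merge GH m x} = card {x\<in>F. fst GH m x}"
    "card {x\<in>E. merge GH m x} = card {x\<in>E. snd GH m x}" for GH m
    using assms(3) unfolding merge_def by (auto intro!: arg_cong[where f = card])
  have "random_codebook M (F \<union> E) = map_pmf merge (pair_pmf (random_codebook M F) (random_codebook M E))"
    unfolding merge_def using assms(1-3) by (simp add: random_codebook_union Int_commute case_prod_unfold)
  then have "measure_pmf.prob (random_codebook M (F \<union> E))
      {B. min (a - int (card {x\<in>E. B (nearest B) x})) b < int (card {x\<in>F. B (nearest B) x})}
    = measure_pmf.prob (pair_pmf (random_codebook M F) (random_codebook M E))
        {(G, H). ?fails G (card {x\<in>E. H (nearest G) x})}"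
    by (simp add: vimage_def case_prod_unfold card_merge nearest_def)
  also have "\<dots> = measure_pmf.prob (map_pmf (\<lambda>(G, H). (G, H (nearest G)))
        (pair_pmf (random_codebook M F) (random_codebook M E))) {(G, w). ?fails G (card {x\<in>E. w x})}"
    by (simp add: vimage_def case_prod_unfold)
  also have "\<dots> = measure_pmf.prob (map_pmf (apsnd (\<lambda>w. card {x\<in>E. w x}))
        (pair_pmf (random_codebook M F) (fair_coins E))) {(G, i). ?fails G i}"
    unfolding random_codebook_def[of M E] nearest_def
    using assms(4) by (subst pair_pmf_Pi_pmf_select)
      (auto simp: arg_min_on_lessThan vimage_def case_prod_unfold apsnd_def)
  also have "\<dots> = measure_pmf.prob (pair_pmf (random_codebook M F) (binomial_pmf (card E) (1/2)))
        {(G, i). ?fails G i}"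
    using assms(1) by (simp add: pair_map_pmf2[symmetric] map_pmf_card_fair_coins)
  also have "\<dots> = (\<Sum>i\<le>card E. binopmf i (card E) (1/2) *
        measure_pmf.prob (random_codebook M F) {G. ?fails G i})"
    by (simp add: measure_pmf_prob_pair_pmf expectation_binomial_pmf)
  also have "\<dots> = (\<Sum>i\<le>card E. binopmf i (card E) (1/2) *
        (1 - binocdf (min (a - int i) b) (card F) (1/2)) ^ M)"
    using assms(2,4) by (simp add: measure_random_codebook_min_weight_greater nearest_def)
  finally show ?thesis .
qed

lemma set_pmf_efcf_block:
  assumes "sx \<in> set_pmf (efcf_block \<delta> k)"
  shows "length sx = k \<and> (\<forall>a\<in>set sx. snd a = None \<or> snd a = Some (fst a))"
  using assms
proof (induction k arbitrary: sx)
  case (Suc k)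
  then obtain a as where "sx = a # as" "a \<in> set_pmf (efcf_pmf \<delta>)" "as \<in> set_pmf (efcf_block \<delta> k)"
    by (auto simp: set_bind_pmf)
  moreover have "snd a = None \<or> snd a = Some (fst a)" if "a \<in> set_pmf (efcf_pmf \<delta>)"
    using that by (auto simp: efcf_pmf_def set_bind_pmf split: if_splits)
  ultimately show ?case
    using Suc.IH by auto
qed simp

lemma map_pmf_erased_efcf_pmf:
  assumes "\<delta> \<in> {0..1}"
  shows "map_pmf (\<lambda>a. snd a = None) (efcf_pmf \<delta>) = bernoulli_pmf \<delta>"
proof -
  have "map_pmf (\<lambda>a. snd a = None) (efcf_pmf \<delta>) =
      pmf_of_set (UNIV :: bool set) \<bind> (\<lambda>_. bernoulli_pmf \<delta> \<bind> return_pmf)"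
    unfolding efcf_pmf_def map_bind_pmf by (intro bind_pmf_cong refl) auto
  then show ?thesis
    by (simp add: bind_return_pmf' bind_pmf_const)
qed

lemma map_pmf_count_erasures_efcf_block:
  assumes "\<delta> \<in> {0..1}"
  shows "map_pmf (\<lambda>sx. count_list (map snd sx) None) (efcf_block \<delta> k) = binomial_pmf k \<delta>"
proof (induction k)
  case 0
  then show ?case
    using assms by (simp add: binomial_pmf_0)
next
  case (Suc k)
  have "map_pmf (\<lambda>sx. count_list (map snd sx) None) (efcf_block \<delta> (Suc k)) =
      do {b \<leftarrow> map_pmf (\<lambda>a. snd a = None) (efcf_pmf \<delta>);
          n \<leftarrow> map_pmf (\<lambda>sx. count_list (map snd sx) None) (efcf_block \<delta> k);
          return_pmf ((if b then 1 else 0) + n)}"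
    by (simp add: map_bind_pmf bind_map_pmf) (intro bind_pmf_cong refl; simp)
  also have "\<dots> = binomial_pmf (Suc k) \<delta>"
    using assms by (simp add: Suc map_pmf_erased_efcf_pmf binomial_pmf_Suc)
  finally show ?case .
qed

type_synonym codebook = "nat \<Rightarrow> nat \<Rightarrow> bool"

definition codeword :: "nat \<Rightarrow> (nat \<Rightarrow> bool) \<Rightarrow> bool list" where
  "codeword k w = map w [0..<k]"

definition unerased_mismatches :: "bool option list \<Rightarrow> (nat \<Rightarrow> bool) \<Rightarrow> nat" where
  "unerased_mismatches x w = card {p. p < length x \<and> x ! p \<noteq> None \<and> x ! p \<noteq> Some (w p)}"

definition nearest_codeword :: "nat \<Rightarrow> codebook \<Rightarrow> bool option list \<Rightarrow> nat" where
  "nearest_codeword M C x = arg_min_on (\<lambda>m. unerased_mismatches x (C m)) {..<M}"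

(* Messages are 1..M, while codewords are indexed from 0. *)
definition codebook_encoder :: "nat \<Rightarrow> codebook \<Rightarrow> bool option list \<Rightarrow> nat pmf" where
  "codebook_encoder M C x = return_pmf (Suc (nearest_codeword M C x))"

definition codebook_decoder ::
    "nat \<Rightarrow> codebook \<Rightarrow> nat \<Rightarrow> (bool list \<times> bool option list) pmf" where
  "codebook_decoder k C u = return_pmf (codeword k (C (u - 1)), map Some (codeword k (C (u - 1))))"

definition codebook_fails ::
    "nat \<Rightarrow> nat \<Rightarrow> real \<Rightarrow> real \<Rightarrow> codebook \<Rightarrow> (bool \<times> bool option) list \<Rightarrow> bool" where
  "codebook_fails k M ds dx C sx \<longleftrightarrow>
     (let w = codeword k (C (nearest_codeword M C (map snd sx)))
      in ds < hamming_dist (map fst sx) w \<or> dx < hamming_dist (map snd sx) (map Some w))"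

(* The excess-distortion probability of the random code given t erasures. *)
definition excess_bound :: "nat \<Rightarrow> nat \<Rightarrow> real \<Rightarrow> real \<Rightarrow> nat \<Rightarrow> real" where
  "excess_bound k M ds dx t = (\<Sum>i=0..t. binopmf i t (1/2) *
     (1 - binocdf (min (\<lfloor>real k * ds\<rfloor> - int i) (\<lfloor>real k * dx\<rfloor> - int t)) (k - t) (1/2)) ^ M)"

lemma valid_code_codebook:
  assumes "M > 0"
  shows "valid_code k M (codebook_encoder M C) (codebook_decoder k C)"
proof -
  have "Suc (nearest_codeword M C x) \<in> {1..M}" for x
    using arg_min_on_lessThan[OF assms, of "\<lambda>m. unerased_mismatches x (C m)"]
    by (simp add: nearest_codeword_def Suc_leI)
  then show ?thesis
    by (simp add: valid_code_def codebook_encoder_def codebook_decoder_def codeword_def)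
qed

lemma excess_prob_codebook:
  "excess_prob \<delta> k (codebook_encoder M C) (codebook_decoder k C) ds dx
     = measure_pmf.prob (efcf_block \<delta> k) {sx. codebook_fails k M ds dx C sx}"
proof -
  have "do {sx \<leftarrow> efcf_block \<delta> k; u \<leftarrow> codebook_encoder M C (map snd sx);
            zy \<leftarrow> codebook_decoder k C u; return_pmf (map fst sx, map snd sx, fst zy, snd zy)}
      = map_pmf (\<lambda>sx. let w = codeword k (C (nearest_codeword M C (map snd sx)))
                      in (map fst sx, map snd sx, w, map Some w)) (efcf_block \<delta> k)"
    by (simp add: codebook_encoder_def codebook_decoder_def map_pmf_def bind_return_pmf Let_def)
  then show ?thesis
    unfolding excess_prob_def by (simp add: vimage_def codebook_fails_def Let_def)
qed

lemma less_divide_iff_floor_less: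
  assumes "n \<le> k" "0 \<le> y"
  shows "y < real n / real k \<longleftrightarrow> \<lfloor>real k * y\<rfloor> < int n"
proof (cases "k = 0")
  case False
  then have "y < real n / real k \<longleftrightarrow> real k * y < real n"
    by (simp add: pos_less_divide_eq mult.commute)
  then show ?thesis
    by (metis floor_less_iff of_int_of_nat_eq)
qed (use assms in simp)

lemma hamming_dist_map:
  assumes "length xs = length ys"
  shows "hamming_dist (map f xs) (map g ys)
    = real (card {i. i < length xs \<and> f (xs ! i) \<noteq> g (ys ! i)}) / real (length xs)"
  unfolding hamming_dist_def using assms by (simp cong: conj_cong)

lemma distortions_codeword:
  fixes w :: "nat \<Rightarrow> bool"
  assumes "length sx = k" and "\<forall>a\<in>set sx. snd a = None \<or> snd a = Some (fst a)"
  defines "E \<equiv> {p. p < k \<and> snd (sx ! p) = None}" and "F \<equiv> {p. p < k \<and> snd (sx ! p) \<noteq> None}"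
    and "miss A \<equiv> card {p\<in>A. w p \<noteq> fst (sx ! p)}"
  shows "hamming_dist (map fst sx) (codeword k w) = real (miss E + miss F) / real k"
    and "hamming_dist (map snd sx) (map Some (codeword k w)) = real (card E + miss F) / real k"
    and "unerased_mismatches (map snd sx) w = miss F"
proof -
  have consistent: "snd (sx ! p) = None \<or> snd (sx ! p) = Some (fst (sx ! p))" if "p < k" for p
    using assms(1,2) that by (simp add: nth_mem)
  have "{p. p < k \<and> fst (sx ! p) \<noteq> w p}
      = {p\<in>E. w p \<noteq> fst (sx ! p)} \<union> {p\<in>F. w p \<noteq> fst (sx ! p)}"
    unfolding E_def F_def by auto
  then have "card {p. p < k \<and> fst (sx ! p) \<noteq> w p} = miss E + miss F"
    unfolding miss_def by (simp add: card_Un_disjoint E_def F_def disjoint_iff)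
  then show "hamming_dist (map fst sx) (codeword k w) = real (miss E + miss F) / real k"
    using assms(1) unfolding codeword_def by (simp add: hamming_dist_map cong: conj_cong)
  have "{p. p < k \<and> snd (sx ! p) \<noteq> Some (w p)} = E \<union> {p\<in>F. w p \<noteq> fst (sx ! p)}"
    unfolding E_def F_def using consistent by force
  then have "card {p. p < k \<and> snd (sx ! p) \<noteq> Some (w p)} = card E + miss F"
    unfolding miss_def by (simp add: card_Un_disjoint E_def F_def disjoint_iff)
  then show "hamming_dist (map snd sx) (map Some (codeword k w)) = real (card E + miss F) / real k"
    using assms(1) unfolding codeword_def map_map by (simp add: hamming_dist_map cong: conj_cong)
  have "{p. p < k \<and> snd (sx ! p) \<noteq> None \<and> snd (sx ! p) \<noteq> Some (w p)} = {p\<in>F. w p \<noteq> fst (sx ! p)}"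
    unfolding F_def using consistent by force
  then show "unerased_mismatches (map snd sx) w = miss F"
    using assms(1) by (simp add: unerased_mismatches_def miss_def cong: conj_cong)
qed

lemma codebook_fails_iff:
  assumes "length sx = k" and "\<forall>a\<in>set sx. snd a = None \<or> snd a = Some (fst a)"
    and "0 \<le> ds" "0 \<le> dx" "M > 0"
  defines "E \<equiv> {p. p < k \<and> snd (sx ! p) = None}" and "F \<equiv> {p. p < k \<and> snd (sx ! p) \<noteq> None}"
    and "flip C m p \<equiv> C m p \<noteq> (m < M \<and> p < k \<and> fst (sx ! p))"
  defines "nearest B \<equiv> arg_min_on (\<lambda>m. card {p\<in>F. B m p}) {..<M}"
  shows "codebook_fails k M ds dx C sx \<longleftrightarrow>
    min (\<lfloor>real k * ds\<rfloor> - int (card {p\<in>E. flip C (nearest (flip C)) p}))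
        (\<lfloor>real k * dx\<rfloor> - int (card E))
      < int (card {p\<in>F. flip C (nearest (flip C)) p})"
proof -
  let ?miss = "\<lambda>m A. card {p\<in>A. C m p \<noteq> fst (sx ! p)}"
  have flip_miss: "card {p\<in>A. flip C m p} = ?miss m A" if "m < M" "A \<subseteq> {..<k}" for m A
    using that unfolding flip_def by (intro arg_cong[where f = card]) auto
  have EF: "E \<subseteq> {..<k}" "F \<subseteq> {..<k}" "E \<inter> F = {}" "E \<union> F = {..<k}"
    unfolding E_def F_def by auto
  have fin: "finite E" "finite F"
    unfolding E_def F_def by auto
  have card_EF: "card E + card F = k"
    using card_Un_disjoint[OF fin EF(3)] EF(4) by simp
  have "?miss m E \<le> card E" for m
    by (rule card_mono[OF fin(1)]) auto
  moreover have "?miss m F \<le> card F" for m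
    by (rule card_mono[OF fin(2)]) auto
  ultimately have bounded: "?miss m E + ?miss m F \<le> k" "card E + ?miss m F \<le> k" for m
    using card_EF add_le_mono by fastforce+
  define m0 where "m0 = nearest (flip C)"
  have "m0 < M"
    unfolding m0_def nearest_def using assms(5) by (rule arg_min_on_lessThan)
  note distortions = distortions_codeword[OF assms(1,2), folded E_def F_def]
  have nearest: "nearest_codeword M C (map snd sx) = m0"
    unfolding m0_def nearest_def nearest_codeword_def
    by (intro arg_min_on_cong) (simp add: distortions(3) flip_miss[OF _ EF(2)])
  have "codebook_fails k M ds dx C sx \<longleftrightarrow>
      \<lfloor>real k * ds\<rfloor> < int (?miss m0 E + ?miss m0 F) \<or> \<lfloor>real k * dx\<rfloor> < int (card E + ?miss m0 F)"
    unfolding codebook_fails_def Let_def nearest distortions(1,2)[of "C m0"]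
    by (simp only: less_divide_iff_floor_less[OF bounded(1) assms(3)]
        less_divide_iff_floor_less[OF bounded(2) assms(4)])
  then show ?thesis
    using flip_miss[OF \<open>m0 < M\<close> EF(1)] flip_miss[OF \<open>m0 < M\<close> EF(2)]
    by (simp add: m0_def[symmetric]) linarith
qed

lemma measure_random_codebook_fails:
  assumes "sx \<in> set_pmf (efcf_block \<delta> k)" "0 \<le> ds" "0 \<le> dx" "M > 0"
  shows "measure_pmf.prob (random_codebook M {..<k}) {C. codebook_fails k M ds dx C sx}
    = excess_bound k M ds dx (count_list (map snd sx) None)"
proof -
  have len: "length sx = k" and letters: "\<forall>a\<in>set sx. snd a = None \<or> snd a = Some (fst a)"
    using set_pmf_efcf_block[OF assms(1)] by auto
  define E where "E = {p. p < k \<and> snd (sx ! p) = None}"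
  define F where "F = {p. p < k \<and> snd (sx ! p) \<noteq> None}"
  \<comment> \<open>Flipping every codeword at the positions where s^k is 1 preserves the uniform codebook
    and turns mismatches with s^k into ones.\<close>
  define flip where "flip C m p \<longleftrightarrow> C m p \<noteq> (m < M \<and> p < k \<and> fst (sx ! p))"
    for C :: codebook and m p
  define nearest where "nearest B = arg_min_on (\<lambda>m. card {p\<in>F. B m p}) {..<M}"
    for B :: codebook
  let ?fails = "\<lambda>B. min (\<lfloor>real k * ds\<rfloor> - int (card {p\<in>E. B (nearest B) p}))
      (\<lfloor>real k * dx\<rfloor> - int (card E)) < int (card {p\<in>F. B (nearest B) p})"
  have EF: "finite E" "finite F" "E \<inter> F = {}" "F \<union> E = {..<k}"
    unfolding E_def F_def by auto
  have card_E: "card E = count_list (map snd sx) None"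
    unfolding E_def count_list_eq_length_filter length_filter_conv_card
    using len by (simp add: eq_commute cong: conj_cong)
  have card_F: "card F = k - card E"
    using card_Un_disjoint[OF EF(2,1)] EF(3,4) by (simp add: Int_commute)
  have "{C. codebook_fails k M ds dx C sx} = flip -` {B. ?fails B}"
    using codebook_fails_iff[OF len letters assms(2-4)]
    unfolding E_def F_def flip_def nearest_def by auto
  then have "measure_pmf.prob (random_codebook M {..<k}) {C. codebook_fails k M ds dx C sx}
      = measure_pmf.prob (map_pmf flip (random_codebook M {..<k})) {B. ?fails B}"
    by simp
  also have "map_pmf flip (random_codebook M {..<k}) = random_codebook M (F \<union> E)"
    unfolding flip_def EF(4) by (rule random_codebook_flip_invariant) auto
  also have "measure_pmf.prob (random_codebook M (F \<union> E)) {B. ?fails B}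
      = (\<Sum>i\<le>card E. binopmf i (card E) (1/2) *
          (1 - binocdf (min (\<lfloor>real k * ds\<rfloor> - int i) (\<lfloor>real k * dx\<rfloor> - int (card E))) (card F) (1/2)) ^ M)"
    unfolding nearest_def using EF(1-3) assms(4) by (rule measure_random_codebook_nearest)
  finally show ?thesis
    by (simp add: excess_bound_def card_E card_F atLeast0AtMost)
qed

lemma expectation_excess_prob_random_codebook:
  assumes "\<delta> \<in> {0..1}" "0 \<le> ds" "0 \<le> dx" "M > 0"
  shows "measure_pmf.expectation (random_codebook M {..<k})
      (\<lambda>C. excess_prob \<delta> k (codebook_encoder M C) (codebook_decoder k C) ds dx)
    = (\<Sum>t=0..k. binopmf t k \<delta> * excess_bound k M ds dx t)"
proof -
  have "measure_pmf.expectation (random_codebook M {..<k})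
      (\<lambda>C. excess_prob \<delta> k (codebook_encoder M C) (codebook_decoder k C) ds dx)
    = measure_pmf.expectation (efcf_block \<delta> k)
      (\<lambda>sx. measure_pmf.prob (random_codebook M {..<k}) {C. codebook_fails k M ds dx C sx})"
    unfolding excess_prob_codebook by (rule expectation_prob_swap)
  also have "\<dots> = measure_pmf.expectation (efcf_block \<delta> k)
      (\<lambda>sx. excess_bound k M ds dx (count_list (map snd sx) None))"
    using assms(2-4)
    by (intro integral_cong_AE) (auto simp: AE_measure_pmf_iff measure_random_codebook_fails)
  also have "\<dots> = measure_pmf.expectation (binomial_pmf k \<delta>) (excess_bound k M ds dx)"
    by (simp flip: map_pmf_count_erasures_efcf_block[OF assms(1)])
  finally show ?thesis
    using assms(1) by (simp add: expectation_binomial_pmf atLeast0AtMost)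
qed

theorem theorem7:
  fixes \<delta> ds dx :: real and k M :: nat
  assumes "0 \<le> \<delta>" "\<delta> \<le> 1"
    and "(ds, dx) \<in> D2 \<delta> \<union> D3 \<delta>"
    and "M > 0"
  shows "is_code \<delta> k M ds dx
    (\<Sum>t=0..k. binopmf t k \<delta> * (\<Sum>i=0..t. binopmf i t (1/2) *
       (1 - binocdf (min (\<lfloor>real k * ds\<rfloor> - int i) (\<lfloor>real k * dx\<rfloor> - int t)) (k - t) (1/2)) ^ M))"
proof -
  define excess where
    "excess C = excess_prob \<delta> k (codebook_encoder M C) (codebook_decoder k C) ds dx" for C
  have "0 \<le> ds" "0 \<le> dx"
    using assms(1,3) by (auto simp: D2_def D3_def)
  obtain C where "excess C \<le> measure_pmf.expectation (random_codebook M {..<k}) excess"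
    using measure_pmf_exists_le_expectation[where p = "random_codebook M {..<k}" and f = excess]
      finite_set_pmf_random_codebook[OF finite_lessThan] by blast
  also have "\<dots> = (\<Sum>t=0..k. binopmf t k \<delta> * excess_bound k M ds dx t)"
    unfolding excess_def using assms(1,2,4) \<open>0 \<le> ds\<close> \<open>0 \<le> dx\<close>
    by (simp add: expectation_excess_prob_random_codebook)
  finally show ?thesis
    unfolding is_code_def excess_bound_def excess_def using valid_code_codebook[OF assms(4)] by blast
qed

end
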